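(* Let $\ell\ge2$ and $V=(\mathbb{F}_2)^{2^\ell}$. If $G<\mathrm{GL}(V)$ is a subgroup isomorphic to $\mathrm{Alt}((\mathbb{F}_2)^{128})$, then $\ell\ge67$.
   Context: $\mathrm{Alt}((\mathbb{F}_2)^{128})$ denotes the alternating group on the set $(\mathbb{F}_2)^{128}$ (of cardinality $2^{128}$). *)

theory Defs
  imports "HOL-Algebra.Sym_Groups"
begin

text \<open>The vector space (F_2)^n, modelled as bit-vectors nat => bool vanishing from index n on.
  Addition is pointwise XOR (the only nontrivial F_2 scalar is 1, so F_2-linear = additive).\<close>
definition F2vec :: "nat \<Rightarrow> (nat \<Rightarrow> bool) set" where
  "F2vec n = {v. \<forall>i\<ge>n. \<not> v i}"

definition vadd :: "(nat \<Rightarrow> bool) \<Rightarrow> (nat \<Rightarrow> bool) \<Rightarrow> (nat \<Rightarrow> bool)" where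
  "vadd v w = (\<lambda>i. v i \<noteq> w i)"

definition GL2_set :: "nat \<Rightarrow> ((nat \<Rightarrow> bool) \<Rightarrow> (nat \<Rightarrow> bool)) set" where
  "GL2_set n = {f. bij_betw f (F2vec n) (F2vec n)
                  \<and> (\<forall>x\<in>F2vec n. \<forall>y\<in>F2vec n. f (vadd x y) = vadd (f x) (f y))
                  \<and> (\<forall>x. x \<notin> F2vec n \<longrightarrow> f x = x)}"

definition GL2 :: "nat \<Rightarrow> ((nat \<Rightarrow> bool) \<Rightarrow> (nat \<Rightarrow> bool)) monoid" where
  "GL2 n = \<lparr>carrier = GL2_set n, mult = (\<circ>), one = id\<rparr>"

definition Alt :: "'a set \<Rightarrow> ('a \<Rightarrow> 'a) monoid" where
  "Alt X = \<lparr> carrier = {p. p permutes X \<and> evenperm p}, mult = (\<lambda>f g. f \<circ> g), one = id \<rparr>"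

end

theory Submission
  imports Defs "HOL-Library.FuncSet"
begin

text \<open>A counting argument suffices. A linear map of \<open>F\<^sub>2^d\<close> is determined by the images of
  the \<open>d\<close> unit vectors, so \<open>|GL\<^sub>d(F\<^sub>2)| \<le> 2^(d^2)\<close>. On the other hand \<open>|Alt(X)| = |X|!/2\<close>,
  and \<open>(2^128)! \<ge> (2^127)^(2^127)\<close>. For \<open>d = 2^l\<close> an embedding therefore forces
  \<open>127 \<cdot> 2^127 \<le> 2^(2l) + 1\<close>, i.e. \<open>l \<ge> 67\<close>.\<close>

lemma F2vec_eq_image_Pow: "F2vec n = (\<lambda>S i. i \<in> S) ` Pow {..<n}"
proof
  show "F2vec n \<subseteq> (\<lambda>S i. i \<in> S) ` Pow {..<n}"
  proof
    fix v assume "v \<in> F2vec n"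
    then have "v = (\<lambda>i. i \<in> {i. v i})" "{i. v i} \<in> Pow {..<n}"
      by (auto simp: F2vec_def not_less[symmetric])
    then show "v \<in> (\<lambda>S i. i \<in> S) ` Pow {..<n}" by blast
  qed
qed (auto simp: F2vec_def)

lemma finite_F2vec: "finite (F2vec n)"
  by (simp add: F2vec_eq_image_Pow)

lemma card_F2vec: "card (F2vec n) = 2 ^ n"
proof -
  have "inj_on (\<lambda>S i. i \<in> S) (Pow {..<n})"
    by (auto simp: inj_on_def fun_eq_iff)
  then show ?thesis
    by (simp add: F2vec_eq_image_Pow card_image card_Pow)
qed

definition unit_vec :: "nat \<Rightarrow> nat \<Rightarrow> bool" where
  "unit_vec k = (\<lambda>i. i = k)"

lemma unit_vec_in_F2vec: "k < n \<Longrightarrow> unit_vec k \<in> F2vec n"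
  by (auto simp: F2vec_def unit_vec_def)

lemma vadd_clear_bit_unit_vec: "v k \<Longrightarrow> vadd (v(k := False)) (unit_vec k) = v"
  by (auto simp: vadd_def unit_vec_def fun_eq_iff)

lemma GL2_set_vadd:
  "f \<in> GL2_set d \<Longrightarrow> x \<in> F2vec d \<Longrightarrow> y \<in> F2vec d \<Longrightarrow> f (vadd x y) = vadd (f x) (f y)"
  by (simp add: GL2_set_def)

lemma GL2_set_zero:
  assumes "f \<in> GL2_set d"
  shows "f (\<lambda>i. False) = (\<lambda>i. False)"
proof -
  have "(\<lambda>i. False) \<in> F2vec d" by (simp add: F2vec_def)
  from GL2_set_vadd[OF assms this this] show ?thesis
    by (simp add: vadd_def fun_eq_iff)
qed

lemma GL2_set_eqI:
  assumes f: "f \<in> GL2_set d" and g: "g \<in> GL2_set d"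
    and agree: "\<And>k. k < d \<Longrightarrow> f (unit_vec k) = g (unit_vec k)"
  shows "f = g"
proof
  have agree_below: "f v = g v" if "\<forall>i\<ge>n. \<not> v i" "n \<le> d" for n v
    using that
  proof (induction n arbitrary: v)
    case 0
    then have "v = (\<lambda>i. False)" by auto
    then show ?case using GL2_set_zero[OF f] GL2_set_zero[OF g] by simp
  next
    case (Suc n)
    show ?case
    proof (cases "v n")
      case False
      with Suc.prems have "\<forall>i\<ge>n. \<not> v i" by (metis le_antisym not_less_eq_eq)
      with Suc show ?thesis by simp
    next
      case True
      define w where "w = v(n := False)"
      have v_eq: "v = vadd w (unit_vec n)"
        using True by (simp add: w_def vadd_clear_bit_unit_vec)
      have w_below: "\<forall>i\<ge>n. \<not> w i"
        using Suc.prems by (metis w_def fun_upd_apply le_antisym not_less_eq_eq)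
      have w: "w \<in> F2vec d"
        using w_below Suc.prems by (auto simp: F2vec_def)
      have e: "unit_vec n \<in> F2vec d"
        using Suc.prems by (simp add: unit_vec_in_F2vec)
      have "f v = vadd (f w) (f (unit_vec n))"
        using GL2_set_vadd[OF f w e] v_eq by simp
      also have "\<dots> = vadd (g w) (g (unit_vec n))"
        using Suc.IH[OF w_below] Suc.prems agree[of n] by simp
      also have "\<dots> = g v"
        using GL2_set_vadd[OF g w e] v_eq by simp
      finally show ?thesis .
    qed
  qed
  fix x
  show "f x = g x"
  proof (cases "x \<in> F2vec d")
    case True
    then show ?thesis by (intro agree_below[of d]) (auto simp: F2vec_def)
  next
    case False
    then show ?thesis using f g by (simp add: GL2_set_def)
  qed
qed

lemma card_subset_GL2_set_le:
  assumes "G \<subseteq> GL2_set d"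
  shows "card G \<le> 2 ^ (d * d)"
proof -
  define columns where "columns f = (\<lambda>k\<in>{..<d}. f (unit_vec k))"
    for f :: "(nat \<Rightarrow> bool) \<Rightarrow> nat \<Rightarrow> bool"
  have "inj_on columns G"
  proof (rule inj_onI)
    fix f g assume "f \<in> G" "g \<in> G" "columns f = columns g"
    show "f = g"
    proof (rule GL2_set_eqI[of f d g])
      fix k assume "k < d"
      then show "f (unit_vec k) = g (unit_vec k)"
        using fun_cong[OF \<open>columns f = columns g\<close>, of k] by (simp add: columns_def)
    qed (use \<open>f \<in> G\<close> \<open>g \<in> G\<close> assms in auto)
  qed
  moreover have "columns ` G \<subseteq> (\<Pi>\<^sub>E k\<in>{..<d}. F2vec d)"
  proof
    fix y assume "y \<in> columns ` G"
    then obtain f where "f \<in> G" "y = columns f" by auto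
    moreover have "f ` F2vec d = F2vec d"
      using \<open>f \<in> G\<close> assms unfolding GL2_set_def bij_betw_def by blast
    ultimately show "y \<in> (\<Pi>\<^sub>E k\<in>{..<d}. F2vec d)"
      by (auto simp: columns_def intro: unit_vec_in_F2vec)
  qed
  ultimately have "card G \<le> card (\<Pi>\<^sub>E k\<in>{..<d}. F2vec d)"
    by (intro card_inj_on_le) (simp_all add: finite_PiE finite_F2vec)
  also have "\<dots> = 2 ^ (d * d)"
    by (simp add: card_PiE card_F2vec power_mult[symmetric] mult.commute)
  finally show ?thesis .
qed

lemma power_diff_le_fact: "k ^ (n - k) \<le> fact n"
proof (induction n)
  case 0
  then show ?case by simp
next
  case (Suc n)
  show ?case
  proof (cases "Suc n \<le> k")
    case True
    then show ?thesis by (simp del: fact_Suc)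
  next
    case False
    then have "k ^ (Suc n - k) = k * k ^ (n - k)" by (simp add: Suc_diff_le)
    also have "\<dots> \<le> Suc n * fact n" using False Suc.IH by (intro mult_mono) auto
    finally show ?thesis by simp
  qed
qed

lemma fact_card_le_card_Alt:
  assumes "finite X" and "2 \<le> card X"
  shows "fact (card X) \<le> 2 * card (carrier (Alt X))"
proof -
  obtain a b where ab: "a \<in> X" "b \<in> X" "a \<noteq> b"
  proof -
    obtain S where "S \<subseteq> X" "card S = 2"
      using obtain_subset_with_card_n[OF assms(2)] by blast
    then show thesis using that by (auto simp: card_2_iff)
  qed
  let ?E = "carrier (Alt X)" and ?\<tau> = "transpose a b"
  have E: "?E = {p. p permutes X \<and> evenperm p}" by (simp add: Alt_def)
  have \<tau>: "?\<tau> permutes X" using ab by (simp add: permutes_swap_id)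
  have "{p. p permutes X} \<subseteq> ?E \<union> (\<lambda>p. p \<circ> ?\<tau>) ` ?E"
  proof
    fix p assume p: "p \<in> {p. p permutes X}"
    show "p \<in> ?E \<union> (\<lambda>p. p \<circ> ?\<tau>) ` ?E"
    proof (cases "evenperm p")
      case False
      have "permutation p" "permutation ?\<tau>"
        using p \<tau> assms(1) by (auto intro: permutes_imp_permutation)
      then have "evenperm (p \<circ> ?\<tau>)"
        using False ab(3) by (simp add: evenperm_comp evenperm_swap)
      moreover have "p \<circ> ?\<tau> permutes X" using p \<tau> by (simp add: permutes_compose)
      moreover have "p = (p \<circ> ?\<tau>) \<circ> ?\<tau>" by (simp add: fun_eq_iff)
      ultimately show ?thesis using E by blast
    qed (use p E in auto)
  qed
  then have "card {p. p permutes X} \<le> card (?E \<union> (\<lambda>p. p \<circ> ?\<tau>) ` ?E)"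
    by (intro card_mono) (use finite_permutations[OF assms(1)] E in auto)
  also have "\<dots> \<le> card ?E + card ((\<lambda>p. p \<circ> ?\<tau>) ` ?E)" by (rule card_Un_le)
  also have "\<dots> \<le> 2 * card ?E"
    using card_image_le[of ?E "\<lambda>p. p \<circ> ?\<tau>"] finite_permutations[OF assms(1)] E by auto
  finally show ?thesis using card_permutations[OF refl assms(1)] by simp
qed

text \<open>Kept symbolic in \<open>k\<close>: for a numeral \<open>k\<close> the simplifier would try to evaluate
  \<open>2 ^ (k * 2 ^ k)\<close>.\<close>

lemma card_Alt_F2vec_le_GL2_exponent:
  assumes "G \<subseteq> GL2_set d" and "card G = card (carrier (Alt (F2vec (Suc k))))"
  shows "k * 2 ^ k \<le> Suc (d * d)"
proof -
  have "(2::nat) ^ (k * 2 ^ k) = (2 ^ k) ^ (2 ^ Suc k - 2 ^ k)"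
    by (simp add: power_mult mult.commute)
  also have "\<dots> \<le> fact (2 ^ Suc k)"
    by (rule power_diff_le_fact)
  also have "\<dots> \<le> 2 * card G"
    using fact_card_le_card_Alt[of "F2vec (Suc k)"] assms(2)
    by (simp add: finite_F2vec card_F2vec)
  also have "\<dots> \<le> 2 ^ Suc (d * d)"
    using card_subset_GL2_set_le[OF assms(1)] by simp
  finally show ?thesis
    by (rule power_le_imp_le_exp[rotated]) simp
qed

theorem mainTheorem12:
  fixes l :: nat and G :: "((nat \<Rightarrow> bool) \<Rightarrow> (nat \<Rightarrow> bool)) set"
  assumes "l \<ge> 2"
    and "subgroup G (GL2 (2 ^ l))"
    and "(GL2 (2 ^ l))\<lparr>carrier := G\<rparr> \<cong> Alt (F2vec 128)"
  shows "l \<ge> 67"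
proof (rule ccontr)
  assume "\<not> l \<ge> 67"
  have "G \<subseteq> GL2_set (2 ^ l)"
    using subgroup.subset[OF assms(2)] by (simp add: GL2_def)
  moreover have "card G = card (carrier (Alt (F2vec (Suc 127))))"
    using assms(3) by (auto simp: is_iso_def iso_def bij_betw_same_card)
  ultimately have "127 * 2 ^ 127 \<le> Suc (2 ^ l * 2 ^ l)"
    by (rule card_Alt_F2vec_le_GL2_exponent)
  moreover have "(2::nat) ^ (2 * l) \<le> 2 ^ 132"
    using \<open>\<not> l \<ge> 67\<close> by (intro power_increasing) auto
  then have "(2::nat) ^ l * 2 ^ l \<le> 2 ^ 132"
    by (metis mult_2 power_add)
  ultimately show False by simp
qed

end
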